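(* Let $\mathbb{Z} = \langle g\rangle$ act freely and cospecially on a CAT(0) cube complex $X$ by combinatorial isometries. Then the set of vertices $x\in X^{(0)}$ for which $d(x,gx)$ is minimal spans a nonempty $\langle g\rangle$-invariant convex subcomplex of $X$ (called the combinatorial minset $\mathrm{Min}(g)$).
   Context: $d$ is the combinatorial metric on the vertex set of $X$ (path metric on the 1-skeleton). An action is cospecial if the quotient cube complex is special in the sense of Haglund–Wise (hyperplanes two-sided, no self-intersection, direct self-osculation or inter-osculation). *)

theory Defs
  imports Main
begin

text \<open>The vertex set X^(0) is the whole type 'v; adjacency (1-cells) is E.\<close>

definition walk :: "('v \<Rightarrow> 'v \<Rightarrow> bool) \<Rightarrow> 'v \<Rightarrow> 'v \<Rightarrow> nat \<Rightarrow> bool" where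
  "walk E x y n \<longleftrightarrow> (\<exists>p::nat \<Rightarrow> 'v. p 0 = x \<and> p n = y \<and> (\<forall>i<n. E (p i) (p (Suc i))))"

definition gdist :: "('v \<Rightarrow> 'v \<Rightarrow> bool) \<Rightarrow> 'v \<Rightarrow> 'v \<Rightarrow> nat" where
  "gdist E x y = (LEAST n. walk E x y n)"

definition simple_graph :: "('v \<Rightarrow> 'v \<Rightarrow> bool) \<Rightarrow> bool" where
  "simple_graph E \<longleftrightarrow> (\<forall>x y. E x y \<longrightarrow> E y x) \<and> (\<forall>x. \<not> E x x)"

definition connected_graph :: "('v \<Rightarrow> 'v \<Rightarrow> bool) \<Rightarrow> bool" where
  "connected_graph E \<longleftrightarrow> (\<forall>x y. \<exists>n. walk E x y n)"

text \<open>Median graphs = 1-skeleta of CAT(0) cube complexes (Chepoi, Roller, Gerasimov);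
  the CAT(0) cube complex is recovered as the cube completion of the graph.\<close>
definition median_graph :: "('v \<Rightarrow> 'v \<Rightarrow> bool) \<Rightarrow> bool" where
  "median_graph E \<longleftrightarrow> simple_graph E \<and> connected_graph E \<and>
     (\<forall>x y z. \<exists>!m. gdist E x m + gdist E m y = gdist E x y
                  \<and> gdist E y m + gdist E m z = gdist E y z
                  \<and> gdist E x m + gdist E m z = gdist E x z)"

abbreviation CAT0_cube_complex :: "('v \<Rightarrow> 'v \<Rightarrow> bool) \<Rightarrow> bool" where
  "CAT0_cube_complex E \<equiv> median_graph E"

text \<open>A k-cube of the complex: an embedding of the vertex set of the standard k-cube
  (subsets of {..<k}) with adjacency exactly along the cube edges.\<close>
definition is_cube :: "('v \<Rightarrow> 'v \<Rightarrow> bool) \<Rightarrow> nat \<Rightarrow> (nat set \<Rightarrow> 'v) \<Rightarrow> bool" where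
  "is_cube E k f \<longleftrightarrow> inj_on f (Pow {..<k}) \<and>
     (\<forall>A\<in>Pow {..<k}. \<forall>B\<in>Pow {..<k}. E (f A) (f B) \<longleftrightarrow> card ((A - B) \<union> (B - A)) = 1)"

definition zpow :: "('v \<Rightarrow> 'v) \<Rightarrow> int \<Rightarrow> 'v \<Rightarrow> 'v" where
  "zpow g n = (if 0 \<le> n then g ^^ nat n else (inv g) ^^ nat (- n))"

definition comb_isometry :: "('v \<Rightarrow> 'v \<Rightarrow> bool) \<Rightarrow> ('v \<Rightarrow> 'v) \<Rightarrow> bool" where
  "comb_isometry E g \<longleftrightarrow> bij g \<and> (\<forall>x y. E x y \<longleftrightarrow> E (g x) (g y))"

text \<open>Free action on the cube complex: no nontrivial element fixes a point, equivalently
  (barycentres) no nontrivial element stabilises a cube.\<close>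
definition free_action :: "('v \<Rightarrow> 'v \<Rightarrow> bool) \<Rightarrow> ('v \<Rightarrow> 'v) \<Rightarrow> bool" where
  "free_action E g \<longleftrightarrow> (\<forall>n::int. n \<noteq> 0 \<longrightarrow>
      (\<forall>k f. is_cube E k f \<longrightarrow> zpow g n ` (f ` Pow {..<k}) \<noteq> f ` Pow {..<k}))"

definition sq :: "('v \<Rightarrow> 'v \<Rightarrow> bool) \<Rightarrow> 'v \<Rightarrow> 'v \<Rightarrow> 'v \<Rightarrow> 'v \<Rightarrow> bool" where
  "sq E a b c d \<longleftrightarrow> E a b \<and> E a c \<and> E b d \<and> E c d \<and> a \<noteq> d \<and> b \<noteq> c"

definition elem_par :: "('v \<Rightarrow> 'v \<Rightarrow> bool) \<Rightarrow> 'v \<times> 'v \<Rightarrow> 'v \<times> 'v \<Rightarrow> bool" where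
  "elem_par E e f \<longleftrightarrow> sq E (fst e) (snd e) (fst f) (snd f)"

text \<open>Oriented edges dual to the same hyperplane, with the same orientation.\<close>
definition opar :: "('v \<Rightarrow> 'v \<Rightarrow> bool) \<Rightarrow> 'v \<times> 'v \<Rightarrow> 'v \<times> 'v \<Rightarrow> bool" where
  "opar E = (elem_par E)\<^sup>*\<^sup>*"

text \<open>Edges dual to the same hyperplane.\<close>
definition hyp_eq :: "('v \<Rightarrow> 'v \<Rightarrow> bool) \<Rightarrow> 'v \<times> 'v \<Rightarrow> 'v \<times> 'v \<Rightarrow> bool" where
  "hyp_eq E e f \<longleftrightarrow> opar E e f \<or> opar E e (snd f, fst f)"

definition gmap :: "('v \<Rightarrow> 'v) \<Rightarrow> 'v \<times> 'v \<Rightarrow> 'v \<times> 'v" where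
  "gmap h e = (h (fst e), h (snd e))"

text \<open>The quotient X/<g> is special (Haglund--Wise), expressed via lifts to X:
  hyperplanes of the quotient are <g>-orbits of hyperplanes of X.\<close>
definition cospecial :: "('v \<Rightarrow> 'v \<Rightarrow> bool) \<Rightarrow> ('v \<Rightarrow> 'v) \<Rightarrow> bool" where
  "cospecial E g \<longleftrightarrow>
    \<comment> \<open>two-sided\<close>
    (\<forall>n a b. E a b \<longrightarrow> \<not> opar E (gmap (zpow g n) (a, b)) (b, a)) \<and>
    \<comment> \<open>no self-intersection\<close>
    (\<forall>n a b c d. sq E a b c d \<longrightarrow> \<not> hyp_eq E (a, c) (gmap (zpow g n) (a, b))) \<and>
    \<comment> \<open>no direct self-osculation\<close>
    (\<forall>n a b c. E a b \<and> E a c \<and> b \<noteq> c \<and> opar E (a, c) (gmap (zpow g n) (a, b))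
        \<longrightarrow> (\<exists>d. sq E a b c d)) \<and>
    \<comment> \<open>no inter-osculation\<close>
    (\<forall>n m a b c d p q r. sq E a b c d \<and> E p q \<and> E p r \<and> q \<noteq> r
        \<and> hyp_eq E (p, q) (gmap (zpow g n) (a, b)) \<and> hyp_eq E (p, r) (gmap (zpow g m) (a, c))
        \<longrightarrow> (\<exists>s. sq E p q r s))"

definition comb_minset :: "('v \<Rightarrow> 'v \<Rightarrow> bool) \<Rightarrow> ('v \<Rightarrow> 'v) \<Rightarrow> 'v set" where
  "comb_minset E g = {x. \<forall>y. gdist E x (g x) \<le> gdist E y (g y)}"

text \<open>A vertex set spans a convex subcomplex iff it is combinatorially (geodesically) convex
  in the 1-skeleton.\<close>
definition spans_convex_subcomplex :: "('v \<Rightarrow> 'v \<Rightarrow> bool) \<Rightarrow> 'v set \<Rightarrow> bool" where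
  "spans_convex_subcomplex E S \<longleftrightarrow>
     (\<forall>x\<in>S. \<forall>y\<in>S. \<forall>z. gdist E x z + gdist E z y = gdist E x y \<longrightarrow> z \<in> S)"

end

theory Submission
  imports Defs
begin

text \<open>Write \<tau> x = d x (g x). The minset is nonempty since \<tau> is nat-valued, and it is
  invariant because every power of g is an isometry commuting with g. For convexity it
  suffices that \<tau> never increases along a geodesic from a minset vertex x to another one y.
  If it increased at the first edge xz, the halfspace H of z for the hyperplane dual to xz
  would be disjoint from g H while containing y.

  The core is that a halfspace H with H \<inter> g H = {} also misses g^2 H. For a counterexample
  with H and g H as close as possible, distance 1 contradicts two-sidedness, distance 2
  contradicts no direct self-osculation together with no self-intersection, and at larger
  distance the hyperplane dual to the second edge of a geodesic from H to g H (or its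
  g^-1-translate) is a closer counterexample, since it cannot cross its own translate.
  Finally a minset vertex y in such an H gives g^-2 y \<in> H, as otherwise the median of
  g^-1 y, y, g y would have displacement less than \<tau> y.\<close>

section \<open>Walks and combinatorial isometries\<close>

lemma walk_0_iff [simp]: "walk E x y 0 \<longleftrightarrow> x = y"
  unfolding walk_def by auto

lemma walk_Suc_iff: "walk E x y (Suc n) \<longleftrightarrow> (\<exists>z. E x z \<and> walk E z y n)"
proof
  assume "walk E x y (Suc n)"
  then obtain p where p: "p 0 = x" "p (Suc n) = y" "\<forall>i<Suc n. E (p i) (p (Suc i))"
    unfolding walk_def by blast
  then have "walk E (p 1) y n"
    unfolding walk_def by (auto intro!: exI[of _ "\<lambda>i. p (Suc i)"])
  with p show "\<exists>z. E x z \<and> walk E z y n" by auto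
next
  assume "\<exists>z. E x z \<and> walk E z y n"
  then obtain z p where "E x z" "p 0 = z" "p n = y" "\<forall>i<n. E (p i) (p (Suc i))"
    unfolding walk_def by blast
  then show "walk E x y (Suc n)"
    unfolding walk_def
    by (intro exI[of _ "\<lambda>i. case i of 0 \<Rightarrow> x | Suc j \<Rightarrow> p j"]) (auto split: nat.split)
qed

lemma walk_edge: "E x y \<Longrightarrow> walk E x y 1"
  by (simp add: walk_Suc_iff)

lemma walk_append: "walk E x y m \<Longrightarrow> walk E y z n \<Longrightarrow> walk E x z (m + n)"
  by (induction m arbitrary: x) (auto simp: walk_Suc_iff)

lemma walk_reverse:
  assumes "\<And>x y. E x y \<Longrightarrow> E y x"
  shows "walk E x y n \<Longrightarrow> walk E y x n"
proof (induction n arbitrary: x)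
  case (Suc n)
  then obtain z where "E x z" "walk E y z n"
    by (auto simp: walk_Suc_iff)
  then show ?case
    using walk_append walk_edge assms by fastforce
qed simp

lemma bij_image_eqI:
  assumes "bij h" "\<And>x. h x \<in> B \<longleftrightarrow> x \<in> A"
  shows "h ` A = B"
proof (intro equalityI subsetI)
  fix x
  assume "x \<in> B"
  moreover have "x = h (inv h x)"
    using assms(1) by (simp add: bij_is_surj surj_f_inv_f)
  ultimately show "x \<in> h ` A"
    using assms(2) by (metis image_eqI)
qed (use assms(2) in auto)

lemma comb_isometry_inv:
  assumes "comb_isometry E h"
  shows "comb_isometry E (inv h)"
proof -
  have "bij h" "\<And>x y. E x y \<longleftrightarrow> E (h x) (h y)"
    using assms unfolding comb_isometry_def by auto
  then show ?thesis
    unfolding comb_isometry_def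
    by (metis bij_imp_bij_inv bij_inv_eq_iff)
qed

lemma comb_isometry_comp:
  "comb_isometry E h \<Longrightarrow> comb_isometry E k \<Longrightarrow> comb_isometry E (h \<circ> k)"
  unfolding comb_isometry_def by (auto intro: bij_comp)

lemma comb_isometry_funpow: "comb_isometry E h \<Longrightarrow> comb_isometry E (h ^^ n)"
proof (induction n)
  case 0
  then show ?case
    unfolding comb_isometry_def by simp
next
  case (Suc n)
  then show ?case
    using comb_isometry_comp by (metis funpow.simps(2))
qed

lemma comb_isometry_zpow: "comb_isometry E g \<Longrightarrow> comb_isometry E (zpow g n)"
  unfolding zpow_def by (simp add: comb_isometry_funpow comb_isometry_inv)

lemma walk_comb_isometry:
  assumes "comb_isometry E h" "walk E x y n"
  shows "walk E (h x) (h y) n"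
proof -
  obtain p where "p 0 = x" "p n = y" "\<forall>i<n. E (p i) (p (Suc i))"
    using assms(2) unfolding walk_def by blast
  with assms(1) show ?thesis
    unfolding walk_def comb_isometry_def by (intro exI[of _ "h \<circ> p"]) auto
qed

lemma gdist_comb_isometry:
  assumes "comb_isometry E h"
  shows "gdist E (h x) (h y) = gdist E x y"
proof -
  have "bij h"
    using assms unfolding comb_isometry_def by blast
  then have "walk E (h x) (h y) n \<longleftrightarrow> walk E x y n" for n
    using walk_comb_isometry[OF assms, of x y n]
      walk_comb_isometry[OF comb_isometry_inv[OF assms], of "h x" "h y" n]
    by (auto simp: bij_is_inj)
  then have "walk E (h x) (h y) = walk E x y"
    by blast
  then show ?thesis
    unfolding gdist_def by simp
qed

lemma zpow_commute:
  assumes "bij g"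
  shows "zpow g n (g x) = g (zpow g n x)"
proof -
  have "inv g ((inv g ^^ k) (g x)) = (inv g ^^ k) x" for k
    using funpow_swap1[of "inv g" k "g x"] assms by (simp add: bij_is_inj)
  then have "(inv g ^^ k) (g x) = g ((inv g ^^ k) x)" for k
    using assms by (metis bij_is_surj surj_f_inv_f)
  then show ?thesis
    unfolding zpow_def by (simp add: funpow_swap1)
qed

lemma comb_minset_nonempty: "comb_minset E g \<noteq> {}"
  using ex_has_least_nat[of "\<lambda>_. True" undefined "\<lambda>x. gdist E x (g x)"]
  unfolding comb_minset_def by auto

lemma comb_minset_image_commuting_isometry:
  assumes "comb_isometry E h" "\<And>x. h (g x) = g (h x)"
  shows "h ` comb_minset E g = comb_minset E g"
proof -
  have "bij h"
    using assms(1) unfolding comb_isometry_def by blast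
  have displacement: "gdist E (h x) (g (h x)) = gdist E x (g x)" for x
    using gdist_comb_isometry[OF assms(1)] assms(2) by metis
  show ?thesis
    using bij_image_eqI[OF \<open>bij h\<close>] displacement unfolding comb_minset_def by simp
qed

section \<open>Median graphs\<close>

locale median =
  fixes E :: "'v \<Rightarrow> 'v \<Rightarrow> bool"
  assumes median_graph: "median_graph E"
begin

abbreviation d :: "'v \<Rightarrow> 'v \<Rightarrow> nat" where
  "d \<equiv> gdist E"

abbreviation between :: "'v \<Rightarrow> 'v \<Rightarrow> 'v \<Rightarrow> bool" where
  "between x z y \<equiv> d x z + d z y = d x y"

lemma edge_sym: "E x y \<Longrightarrow> E y x"
  using median_graph unfolding median_graph_def simple_graph_def by blast

lemma edge_irrefl: "\<not> E x x"
  using median_graph unfolding median_graph_def simple_graph_def by blast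

lemma median_exists: "\<exists>m. between x m y \<and> between y m z \<and> between x m z"
  using median_graph unfolding median_graph_def by blast

lemma median_unique:
  "between x m y \<and> between y m z \<and> between x m z \<Longrightarrow>
   between x m' y \<and> between y m' z \<and> between x m' z \<Longrightarrow> m = m'"
  using median_graph unfolding median_graph_def by blast

lemma walk_gdist: "walk E x y (d x y)"
  using median_graph unfolding median_graph_def connected_graph_def gdist_def
  by (metis LeastI_ex)

lemma gdist_le_walk: "walk E x y n \<Longrightarrow> d x y \<le> n"
  unfolding gdist_def by (rule Least_le)

lemma gdist_triangle: "d x z \<le> d x y + d y z"
  using walk_append[OF walk_gdist walk_gdist] gdist_le_walk by blast

lemma gdist_commute: "d x y = d y x"
  using gdist_le_walk[OF walk_reverse[OF edge_sym walk_gdist]] by (metis le_antisym)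

lemma gdist_eq_0_iff [simp]: "d x y = 0 \<longleftrightarrow> x = y"
  using walk_gdist[of x y] gdist_le_walk[of x x 0] by auto

lemma gdist_self [simp]: "d x x = 0"
  by simp

lemma gdist_eq_1_iff: "d x y = 1 \<longleftrightarrow> E x y"
proof
  show "d x y = 1 \<Longrightarrow> E x y"
    using walk_gdist[of x y] by (simp add: walk_Suc_iff)
  assume "E x y"
  then have "d x y \<le> 1" "d x y \<noteq> 0"
    using gdist_le_walk[OF walk_edge] edge_irrefl by auto
  then show "d x y = 1"
    by linarith
qed

lemma gdist_edge: "E x y \<Longrightarrow> d x y = 1"
  using gdist_eq_1_iff by blast

lemma geodesic_step: "d x y = Suc n \<Longrightarrow> \<exists>z. E x z \<and> d z y = n"
proof -
  assume xy: "d x y = Suc n"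
  then obtain z where z: "E x z" "walk E z y n"
    using walk_gdist[of x y] by (auto simp: walk_Suc_iff)
  have "d x y \<le> d x z + d z y"
    by (rule gdist_triangle)
  with z xy show ?thesis
    using gdist_le_walk[OF z(2)] gdist_edge[OF z(1)] by (intro exI[of _ z]) auto
qed

lemma interval_step:
  assumes "d x z = Suc n" "between x z y"
  shows "\<exists>x'. E x x' \<and> d x' z = n \<and> d x' y + 1 = d x y"
proof -
  obtain x' where x': "E x x'" "d x' z = n"
    using geodesic_step[OF assms(1)] by blast
  have "d x' y \<le> d x' z + d z y" "d x y \<le> d x x' + d x' y"
    using gdist_triangle by blast+
  with assms x' show ?thesis
    using gdist_edge[OF x'(1)] by (intro exI[of _ x']) auto
qed

lemma geodesic_two_steps:
  assumes "E x u1" "E u1 u2" "d x y = d u2 y + 2"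
  shows "d x u2 = 2" "d u1 y = d u2 y + 1"
proof -
  have "d x y \<le> d x u2 + d u2 y" "d x u2 \<le> d x u1 + d u1 u2"
    "d x y \<le> d x u1 + d u1 y" "d u1 y \<le> d u1 u2 + d u2 y"
    using gdist_triangle by blast+
  with assms show "d x u2 = 2" "d u1 y = d u2 y + 1"
    using gdist_edge[OF assms(1)] gdist_edge[OF assms(2)] by linarith+
qed

text \<open>The median of a, b and z is a or b.\<close>
lemma gdist_edge_parity:
  assumes "E a b"
  shows "d z b = d z a + 1 \<or> d z a = d z b + 1"
proof -
  obtain m where m: "between a m b" "between b m z" "between a m z"
    using median_exists by blast
  have ab: "d a b = 1" "d b a = 1"
    using assms edge_sym gdist_edge by blast+
  with m(1) have "d a m = 0 \<or> d m b = 0"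
    by linarith
  then consider "m = a" | "m = b"
    by auto
  then show ?thesis
  proof cases
    case 1
    then show ?thesis
      using m(2) ab gdist_commute[of z a] gdist_commute[of z b] by simp
  next
    case 2
    then show ?thesis
      using m(3) ab gdist_commute[of z a] gdist_commute[of z b] by simp
  qed
qed

lemma gdist_common_neighbours:
  assumes "E a b" "E a c" "b \<noteq> c"
  shows "d b c = 2"
proof -
  have "d b c \<le> d b a + d a c"
    by (rule gdist_triangle)
  moreover have "d b a = 1" "d a c = 1"
    using assms gdist_edge edge_sym by auto
  ultimately show ?thesis
    using assms(3) gdist_edge_parity[OF assms(2), of b] by fastforce
qed

lemma quadrangle:
  assumes "E x x1" "E x x2" "x1 \<noteq> x2" "d x1 y + 1 = d x y" "d x2 y + 1 = d x y"
  shows "\<exists>s. sq E x x1 x2 s"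
proof -
  obtain s where s: "between x1 s x2" "between x2 s y" "between x1 s y"
    using median_exists by blast
  have "d x2 x1 \<noteq> 0" "d x1 x2 \<noteq> 0"
    using assms(3) by auto
  then have "s \<noteq> x1" "s \<noteq> x2"
    using s(2,3) assms(4,5) by (auto simp del: gdist_eq_0_iff)
  then have "d x1 s \<noteq> 0" "d s x2 \<noteq> 0"
    by auto
  moreover have "d x1 x2 = 2"
    using gdist_common_neighbours assms(1-3) by blast
  ultimately have "d x1 s = 1" "d s x2 = 1"
    using s(1) by linarith+
  then have "E x1 s" "E x2 s"
    using gdist_eq_1_iff edge_sym by blast+
  moreover have "s \<noteq> x"
    using s(3) assms(4) \<open>d x1 s = 1\<close> by auto
  ultimately show ?thesis
    unfolding sq_def using assms(1-3) by blast
qed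

section \<open>Halfspaces\<close>

definition halfspace :: "'v \<Rightarrow> 'v \<Rightarrow> 'v set" where
  "halfspace a b = {w. d w a < d w b}"

lemma not_in_halfspace_iff: "E a b \<Longrightarrow> w \<notin> halfspace a b \<longleftrightarrow> w \<in> halfspace b a"
  using gdist_edge_parity[of a b w] unfolding halfspace_def by auto

lemma halfspace_complement: "E a b \<Longrightarrow> - halfspace a b = halfspace b a"
  using not_in_halfspace_iff by blast

lemma source_in_halfspace: "E a b \<Longrightarrow> a \<in> halfspace a b"
  using edge_irrefl unfolding halfspace_def by (auto simp: zero_less_iff_neq_zero)

lemma target_notin_halfspace [simp]: "b \<notin> halfspace a b"
  unfolding halfspace_def by simp

text \<open>Otherwise both a and e would be medians of b, c and w.\<close>
lemma halfspace_square_subset: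
  assumes "sq E a b c e"
  shows "halfspace a b \<subseteq> halfspace c e"
proof
  fix w
  assume "w \<in> halfspace a b"
  then have wa: "d w a < d w b"
    unfolding halfspace_def by simp
  have E: "E a b" "E a c" "E b e" "E c e" "a \<noteq> e" "b \<noteq> c"
    using assms unfolding sq_def by auto
  show "w \<in> halfspace c e"
  proof (rule ccontr)
    assume "w \<notin> halfspace c e"
    then have "d w e < d w c"
      using not_in_halfspace_iff[OF E(4)] unfolding halfspace_def by simp
    then have wc: "d w c = d w a + 1" and we: "d w e = d w a" and wb: "d w b = d w a + 1"
      using wa gdist_edge_parity[OF E(1), of w] gdist_edge_parity[OF E(2), of w]
        gdist_edge_parity[OF E(3), of w] gdist_edge_parity[OF E(4), of w] by linarith+
    have "d b c = 2"
      using gdist_common_neighbours[OF E(1,2,6)] .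
    then have "between b a c \<and> between c a w \<and> between b a w"
      "between b e c \<and> between c e w \<and> between b e w"
      using wc we wb gdist_edge E(1-4) edge_sym gdist_commute[of w] by auto
    then have "a = e"
      by (rule median_unique)
    with E(5) show False ..
  qed
qed

lemma halfspace_square: "sq E a b c e \<Longrightarrow> halfspace a b = halfspace c e"
proof -
  assume sq: "sq E a b c e"
  then have "sq E b a e c" and E: "E a b" "E c e"
    unfolding sq_def using edge_sym by auto
  then have "- halfspace a b \<subseteq> - halfspace c e"
    using halfspace_square_subset halfspace_complement[OF E(1)] halfspace_complement[OF E(2)]
    by simp
  with halfspace_square_subset[OF sq] show ?thesis
    by blast
qed

lemma halfspace_opar: "opar E e f \<Longrightarrow> halfspace (fst e) (snd e) = halfspace (fst f) (snd f)"
  unfolding opar_def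
proof (induction rule: rtranclp_induct)
  case (step f f')
  then show ?case
    using halfspace_square unfolding elem_par_def by simp
qed simp

text \<open>The two edges are the ends of a ladder of k squares.\<close>
lemma opar_ladder:
  "E a b \<Longrightarrow> E c e \<Longrightarrow> d a c = k \<Longrightarrow> d b e = k \<Longrightarrow> d a e = k + 1 \<Longrightarrow> d b c = k + 1 \<Longrightarrow>
   opar E (a, b) (c, e)"
proof (induction k arbitrary: a b)
  case 0
  then show ?case
    unfolding opar_def by simp
next
  case (Suc k)
  obtain a' where a': "E a a'" "d a' c = k"
    using geodesic_step[OF Suc.prems(3)] by blast
  have "a' \<noteq> b"
    using a' Suc.prems(6) by auto
  then have a'b: "d a' b = 2"
    using gdist_common_neighbours[OF a'(1) Suc.prems(1)] by simp
  have "d a' e \<le> d a' c + d c e" "d a e \<le> d a a' + d a' e"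
    using gdist_triangle by blast+
  then have a'e: "d a' e = Suc k"
    using gdist_edge[OF Suc.prems(2)] gdist_edge[OF a'(1)] a'(2) Suc.prems(5) by simp
  obtain m where m: "between a' m b" "between b m e" "between a' m e"
    using median_exists by blast
  have "m \<noteq> a'" "m \<noteq> b"
    using m(2,3) a'b a'e Suc.prems(4) gdist_commute[of b a'] by auto
  then have "d a' m \<noteq> 0" "d m b \<noteq> 0"
    by auto
  then have "d a' m = 1" "d m b = 1"
    using m(1) a'b by linarith+
  then have a'm: "E a' m" and bm: "E b m"
    using gdist_eq_1_iff edge_sym by blast+
  have me: "d m e = k"
    using m(2) \<open>d m b = 1\<close> gdist_commute[of b m] Suc.prems(4) by simp
  have "m \<noteq> a"
    using m(3) \<open>d a' m = 1\<close> Suc.prems(5) a'e by auto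
  then have "elem_par E (a, b) (a', m)"
    unfolding elem_par_def sq_def using Suc.prems(1) a' a'm bm \<open>a' \<noteq> b\<close> by auto
  moreover have "d m c \<le> d m e + d e c" "d b c \<le> d b m + d m c"
    using gdist_triangle by blast+
  then have "d m c = k + 1"
    using me gdist_edge[OF Suc.prems(2)] gdist_commute[of e c] gdist_edge[OF bm] Suc.prems(6)
    by simp
  then have "opar E (a', m) (c, e)"
    using Suc.IH a'm Suc.prems(2) a'(2) me a'e by simp
  ultimately show ?case
    unfolding opar_def by (rule converse_rtranclp_into_rtranclp)
qed

lemma crossing_edge_opar:
  assumes "E a b" "E c e" "c \<in> halfspace a b" "e \<notin> halfspace a b"
  shows "opar E (a, b) (c, e)"
proof -
  have "d c a < d c b" "d e b < d e a"
    using assms(3) assms(4) not_in_halfspace_iff[OF assms(1)] unfolding halfspace_def by auto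
  moreover have "d c b = d c a + 1 \<or> d c a = d c b + 1" "d e b = d e a + 1 \<or> d e a = d e b + 1"
    using gdist_edge_parity[OF assms(1)] by blast+
  moreover have "d e a = d c a + 1 \<or> d c a = d e a + 1" "d e b = d c b + 1 \<or> d c b = d e b + 1"
    using gdist_edge_parity[OF assms(2)] gdist_commute by metis+
  ultimately have "d c a = d e b \<and> d e a = d c a + 1 \<and> d c b = d c a + 1"
    by arith
  then show ?thesis
    using opar_ladder[OF assms(1,2)] gdist_commute by metis
qed

lemma halfspace_crossing_edge:
  assumes "E a b" "E u v" "u \<in> halfspace a b" "v \<notin> halfspace a b"
  shows "halfspace u v = halfspace a b"
  using halfspace_opar[OF crossing_edge_opar[OF assms]] by simp

lemma opar_iff_halfspace_eq:
  assumes "E a b" "E c e"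
  shows "opar E (a, b) (c, e) \<longleftrightarrow> halfspace a b = halfspace c e"
proof
  assume "halfspace a b = halfspace c e"
  moreover have "c \<in> halfspace c e"
    using assms(2) by (rule source_in_halfspace)
  ultimately show "opar E (a, b) (c, e)"
    using crossing_edge_opar[OF assms] by simp
qed (use halfspace_opar[of "(a, b)" "(c, e)"] in simp)

lemma halfspace_image:
  assumes "comb_isometry E h"
  shows "h ` halfspace a b = halfspace (h a) (h b)"
proof -
  have "bij h"
    using assms unfolding comb_isometry_def by blast
  show ?thesis
    using bij_image_eqI[OF \<open>bij h\<close>] gdist_comb_isometry[OF assms]
    unfolding halfspace_def by simp
qed

lemma halfspace_convex:
  assumes "E a b" "w1 \<in> halfspace a b" "w2 \<in> halfspace a b" "between w1 z w2"
  shows "z \<in> halfspace a b"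
  using assms(2,4)
proof (induction "d w1 z" arbitrary: w1)
  case (Suc n)
  obtain x where x: "E w1 x" "d x z = n" "d x w2 + 1 = d w1 w2"
    using interval_step[OF Suc.hyps(2)[symmetric] Suc.prems(2)] by blast
  show ?case
  proof (cases "x \<in> halfspace a b")
    case True
    moreover have "between x z w2"
      using Suc.hyps(2) Suc.prems(2) x(2,3) by simp
    ultimately show ?thesis
      using Suc.hyps(1)[OF x(2)[symmetric]] by blast
  next
    case False
    then have "halfspace w1 x = halfspace a b"
      using halfspace_crossing_edge[OF assms(1) x(1) Suc.prems(1)] by blast
    with assms(3) have "d w2 w1 < d w2 x"
      unfolding halfspace_def by auto
    with x(3) show ?thesis
      using gdist_commute[of w2] by simp
  qed
qed simp

lemma halfspace_complement_convex:
  assumes "E a b" "w1 \<notin> halfspace a b" "w2 \<notin> halfspace a b" "between w1 z w2"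
  shows "z \<notin> halfspace a b"
  using halfspace_convex[of b a w1 w2 z] assms not_in_halfspace_iff edge_sym by blast

text \<open>The median of u, v, w lies outside the halfspace, so it differs from v.\<close>
lemma halfspace_detour:
  assumes "E a b" "v \<in> halfspace a b" "u \<notin> halfspace a b" "w \<notin> halfspace a b"
  shows "d u w + 2 \<le> d u v + d v w"
proof -
  obtain m where m: "between u m v" "between v m w" "between u m w"
    using median_exists by blast
  have "m \<notin> halfspace a b"
    using halfspace_complement_convex[OF assms(1,3,4) m(3)] .
  with assms(2) have "d m v \<noteq> 0"
    by auto
  with m show ?thesis
    using gdist_commute[of v m] by linarith
qed

definition halfspaces_cross :: "'v set \<Rightarrow> 'v set \<Rightarrow> bool" where
  "halfspaces_cross H K \<longleftrightarrow> H \<inter> K \<noteq> {} \<and> H - K \<noteq> {} \<and> K - H \<noteq> {} \<and> - (H \<union> K) \<noteq> {}"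

lemma step_towards_within_halfspace:
  assumes "E a b" "E c e"
    and "x \<in> halfspace a b" "y \<notin> halfspace a b" "q \<notin> halfspace a b"
    and "x \<in> halfspace c e" "q \<in> halfspace c e"
  shows "\<exists>x1. E x x1 \<and> x1 \<in> halfspace c e \<and> d x1 y + 1 = d x y"
proof -
  obtain m where m: "between x m y" "between y m q" "between x m q"
    using median_exists by blast
  have "m \<notin> halfspace a b" "m \<in> halfspace c e"
    using halfspace_complement_convex[OF assms(1,4,5) m(2)] halfspace_convex[OF assms(2,6,7) m(3)] .
  with assms(3) obtain n where n: "d x m = Suc n"
    by (metis gdist_eq_0_iff not0_implies_Suc)
  then obtain x1 where x1: "E x x1" "d x1 m = n" "d x1 y + 1 = d x y"
    using interval_step[OF n m(1)] by blast
  have "between x x1 m"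
    using n x1(2) gdist_edge[OF x1(1)] by simp
  then have "x1 \<in> halfspace c e"
    using halfspace_convex[OF assms(2,6) \<open>m \<in> halfspace c e\<close>] by blast
  with x1 show ?thesis
    by blast
qed

text \<open>Walk from x towards y inside both halfspaces until the next steps towards y leave
  one halfspace each; these two edges span the square.\<close>
lemma crossing_halfspaces_square_at:
  assumes "E a b" "E c e"
    and "x \<in> halfspace a b \<inter> halfspace c e" "y \<notin> halfspace a b \<union> halfspace c e"
    and "p \<in> halfspace a b - halfspace c e" "q \<in> halfspace c e - halfspace a b"
  shows "\<exists>x0 x1 x2 s. sq E x0 x1 x2 s \<and>
    halfspace x0 x1 = halfspace a b \<and> halfspace x0 x2 = halfspace c e"
  using assms(3,4)
proof (induction "d x y" arbitrary: x rule: less_induct)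
  case less
  obtain x1 where x1: "E x x1" "x1 \<in> halfspace c e" "d x1 y + 1 = d x y"
    using step_towards_within_halfspace[OF assms(1,2)] less.prems assms(6) by blast
  obtain x2 where x2: "E x x2" "x2 \<in> halfspace a b" "d x2 y + 1 = d x y"
    using step_towards_within_halfspace[OF assms(2,1)] less.prems assms(5) by blast
  show ?case
  proof (cases "x1 \<in> halfspace a b \<or> x2 \<in> halfspace c e")
    case True
    then show ?thesis
      using less.hyps less.prems x1 x2 by (metis IntI less_add_one)
  next
    case False
    then have "x1 \<noteq> x2"
      using x2(2) by blast
    then obtain s where "sq E x x1 x2 s"
      using quadrangle x1 x2 by blast
    moreover have "halfspace x x1 = halfspace a b" "halfspace x x2 = halfspace c e"
      using halfspace_crossing_edge assms(1,2) less.prems(1) x1 x2 False by blast+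
    ultimately show ?thesis
      by blast
  qed
qed

lemma crossing_halfspaces_square:
  assumes "E a b" "E c e" "halfspaces_cross (halfspace a b) (halfspace c e)"
  shows "\<exists>x0 x1 x2 s. sq E x0 x1 x2 s \<and>
    halfspace x0 x1 = halfspace a b \<and> halfspace x0 x2 = halfspace c e"
  using assms(3) crossing_halfspaces_square_at[OF assms(1,2)]
  unfolding halfspaces_cross_def by blast

end

section \<open>Cospecial translations\<close>

locale cospecial_translation = median E for E :: "'v \<Rightarrow> 'v \<Rightarrow> bool" +
  fixes g :: "'v \<Rightarrow> 'v"
  assumes isometry: "comb_isometry E g"
    and cospecial: "cospecial E g"
begin

lemma bij_g: "bij g"
  using isometry unfolding comb_isometry_def by blast

lemma edge_g_iff [simp]: "E (g x) (g y) \<longleftrightarrow> E x y"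
  using isometry unfolding comb_isometry_def by blast

lemma g_inv_g [simp]: "g (inv g x) = x"
  using bij_g by (simp add: bij_is_surj surj_f_inv_f)

lemma inv_g_g [simp]: "inv g (g x) = x"
  using bij_g by (simp add: bij_is_inj)

lemma edge_inv_g_iff [simp]: "E (inv g x) (inv g y) \<longleftrightarrow> E x y"
  by (metis edge_g_iff g_inv_g)

lemma gdist_g [simp]: "d (g x) (g y) = d x y"
  using gdist_comb_isometry[OF isometry] .

lemma g_mem_image_iff [simp]: "g x \<in> g ` S \<longleftrightarrow> x \<in> S"
  using bij_g by (simp add: bij_is_inj inj_image_mem_iff)

lemma mem_g_image_iff: "x \<in> g ` S \<longleftrightarrow> inv g x \<in> S"
  by (metis g_inv_g g_mem_image_iff)

lemma g_image_inv_g_image [simp]: "g ` inv g ` S = S"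
  using bij_g by (simp add: bij_is_surj image_comp surj_iff)

lemma mem_inv_g_image_iff: "x \<in> inv g ` S \<longleftrightarrow> g x \<in> S"
  by (metis g_image_inv_g_image g_mem_image_iff)

lemma g_image_Compl: "g ` (- S) = - g ` S"
  using bij_g by (rule bij_image_Compl_eq)

lemma g_image_halfspace: "g ` halfspace a b = halfspace (g a) (g b)"
  using halfspace_image[OF isometry] .

lemma inv_g_image_halfspace: "inv g ` halfspace a b = halfspace (inv g a) (inv g b)"
  using halfspace_image[OF comb_isometry_inv[OF isometry]] .

lemma gmap_zpow_1: "gmap (zpow g 1) (x, y) = (g x, g y)"
  unfolding gmap_def zpow_def by simp

lemma cospecial_g:
  "E a b \<Longrightarrow> \<not> opar E (g a, g b) (b, a)"
  "sq E a b c e \<Longrightarrow> \<not> hyp_eq E (a, c) (g a, g b)"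
  "E a b \<Longrightarrow> E a c \<Longrightarrow> b \<noteq> c \<Longrightarrow> opar E (a, c) (g a, g b) \<Longrightarrow> \<exists>e. sq E a b c e"
  using cospecial gmap_zpow_1 unfolding cospecial_def by metis+

lemma two_sided: "E a b \<Longrightarrow> g ` halfspace a b \<noteq> - halfspace a b"
  using cospecial_g(1) opar_iff_halfspace_eq edge_sym
  by (metis edge_g_iff g_image_halfspace halfspace_complement)

lemma no_self_intersection: "sq E a b c e \<Longrightarrow> halfspace a c \<noteq> g ` halfspace a b"
  using cospecial_g(2) opar_iff_halfspace_eq unfolding hyp_eq_def sq_def
  by (metis edge_g_iff g_image_halfspace)

lemma no_direct_self_osculation:
  "E a b \<Longrightarrow> E a c \<Longrightarrow> b \<noteq> c \<Longrightarrow> halfspace a c = g ` halfspace a b \<Longrightarrow> \<exists>e. sq E a b c e"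
  using cospecial_g(3) opar_iff_halfspace_eq
  by (metis edge_g_iff g_image_halfspace)

lemma translate_not_crossing: "E a b \<Longrightarrow> \<not> halfspaces_cross (halfspace a b) (g ` halfspace a b)"
proof
  assume "E a b" "halfspaces_cross (halfspace a b) (g ` halfspace a b)"
  then obtain x0 x1 x2 s where "sq E x0 x1 x2 s"
    "halfspace x0 x1 = halfspace a b" "halfspace x0 x2 = halfspace (g a) (g b)"
    using crossing_halfspaces_square[of a b "g a" "g b"] by (auto simp: g_image_halfspace)
  then show False
    using no_self_intersection by (metis g_image_halfspace)
qed

text \<open>The configuration ruled out by the cospecial conditions: H is disjoint from g H but
  meets g^2 H. The witnesses x and y measure the gap between H and g H, and the proof of
  not_returning descends on d x y.\<close>
definition returning :: "'v \<Rightarrow> 'v \<Rightarrow> 'v \<Rightarrow> 'v \<Rightarrow> bool" where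
  "returning a b x y \<longleftrightarrow> E a b \<and> x \<in> halfspace a b \<and> y \<in> g ` halfspace a b \<and>
     halfspace a b \<inter> g ` halfspace a b = {} \<and> halfspace a b \<inter> g ` g ` halfspace a b \<noteq> {}"

definition minimal_returning :: "'v \<Rightarrow> 'v \<Rightarrow> 'v \<Rightarrow> 'v \<Rightarrow> bool" where
  "minimal_returning a b x y \<longleftrightarrow> returning a b x y \<and>
     (\<forall>a' b' x' y'. returning a' b' x' y' \<longrightarrow> d x y \<le> d x' y')"

lemma minimal_returningD:
  assumes "minimal_returning a b x y"
  shows "returning a b x y" "returning a' b' x' y' \<Longrightarrow> d x y \<le> d x' y'"
  using assms unfolding minimal_returning_def by blast+

lemma returning_change_witnesses:
  "returning a b x y \<Longrightarrow> x' \<in> halfspace a b \<Longrightarrow> y' \<in> g ` halfspace a b \<Longrightarrow> returning a b x' y'"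
  unfolding returning_def by blast

lemma minimal_returning_exists:
  assumes "returning a b x y"
  shows "\<exists>a b x y. minimal_returning a b x y"
proof -
  let ?gap = "\<lambda>n. \<exists>a b x y. returning a b x y \<and> d x y = n"
  obtain a' b' x' y' where "returning a' b' x' y'" "d x' y' = (LEAST n. ?gap n)"
    using LeastI[of ?gap "d x y"] assms by blast
  moreover have "(LEAST n. ?gap n) \<le> d x'' y''" if "returning a'' b'' x'' y''" for a'' b'' x'' y''
    using that by (blast intro: Least_le)
  ultimately show ?thesis
    unfolding minimal_returning_def by metis
qed

text \<open>An edge xy would be dual to both hyperplanes, with opposite orientations.\<close>
lemma returning_gdist_ge_2:
  assumes "returning a b x y"
  shows "2 \<le> d x y"
proof (rule ccontr)
  let ?H = "halfspace a b"
  have E: "E a b" "E (g a) (g b)" and x: "x \<in> ?H" "x \<notin> g ` ?H" and y: "y \<in> g ` ?H" "y \<notin> ?H"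
    using assms unfolding returning_def by auto
  assume "\<not> 2 \<le> d x y"
  moreover have "x \<noteq> y"
    using x y by blast
  ultimately have "E x y"
    using gdist_eq_1_iff gdist_eq_0_iff by (metis One_nat_def less_2_cases not_le)
  then have "halfspace x y = ?H" "halfspace y x = g ` ?H"
    using halfspace_crossing_edge[OF E(1) _ x(1) y(2)]
      halfspace_crossing_edge[OF E(2) _ y(1)[unfolded g_image_halfspace]
        x(2)[unfolded g_image_halfspace]]
      edge_sym g_image_halfspace by auto
  then show False
    using two_sided[OF E(1)] halfspace_complement[OF \<open>E x y\<close>] by simp
qed

text \<open>If the middle vertex v lies in neither halfspace, the hyperplane dual to vy is the
  translate of the one dual to vx, so they osculate directly at v and hence cross.\<close>
lemma minimal_returning_gdist_ne_2:
  assumes "minimal_returning a b x y"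
  shows "d x y \<noteq> 2"
proof
  let ?H = "halfspace a b"
  assume "d x y = 2"
  then obtain v where v: "E x v" "E v y"
    using geodesic_step[of x y 1] gdist_eq_1_iff by auto
  note r = minimal_returningD(1)[OF assms] and min = minimal_returningD(2)[OF assms]
  have E: "E a b" "E (g a) (g b)" and x: "x \<in> ?H" "x \<notin> g ` ?H" and y: "y \<in> g ` ?H" "y \<notin> ?H"
    using r unfolding returning_def by auto
  have "v \<notin> ?H"
    using min[OF returning_change_witnesses[OF r _ y(1)]] gdist_edge[OF v(2)] \<open>d x y = 2\<close>
    by force
  moreover have "v \<notin> g ` ?H"
    using min[OF returning_change_witnesses[OF r x(1)]] gdist_edge[OF v(1)] \<open>d x y = 2\<close>
    by force
  ultimately have "halfspace x v = ?H" "halfspace y v = g ` ?H"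
    using halfspace_crossing_edge[OF E(1) v(1) x(1)]
      halfspace_crossing_edge[OF E(2) edge_sym[OF v(2)]] y(1) g_image_halfspace by auto
  then have "halfspace v y = g ` halfspace v x"
    using halfspace_complement edge_sym v g_image_Compl by metis
  moreover obtain e where "sq E v x y e"
    using no_direct_self_osculation[OF edge_sym[OF v(1)] v(2)] x y calculation by blast
  ultimately show False
    using no_self_intersection by blast
qed

lemma minimal_returning_halfspace_subset:
  assumes "minimal_returning a b x y" "E x u1" "E u1 u2" "d x y = d u2 y + 2"
  shows "halfspace a b \<subseteq> halfspace u1 u2"
proof
  let ?H = "halfspace a b"
  note r = minimal_returningD(1)[OF assms(1)] and min = minimal_returningD(2)[OF assms(1)]
  have E: "E a b" and x: "x \<in> ?H" and y: "y \<in> g ` ?H"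
    using r unfolding returning_def by auto
  have xu2: "d x u2 = 2"
    using geodesic_two_steps[OF assms(2-4)] by simp
  fix p
  assume "p \<in> ?H"
  show "p \<in> halfspace u1 u2"
  proof (rule ccontr)
    assume "p \<notin> halfspace u1 u2"
    then have p: "p \<in> halfspace u2 u1"
      using not_in_halfspace_iff[OF assms(3)] by blast
    obtain m where m: "between p m x" "between x m u2" "between p m u2"
      using median_exists by blast
    have "m \<in> ?H"
      using halfspace_convex[OF E \<open>p \<in> ?H\<close> x m(1)] .
    have "u2 \<in> halfspace u2 u1"
      using source_in_halfspace edge_sym assms(3) by blast
    then have "m \<in> halfspace u2 u1"
      using halfspace_convex[OF edge_sym[OF assms(3)] p _ m(3)] by blast
    moreover have "x \<notin> halfspace u2 u1"
      using xu2 gdist_edge[OF assms(2)] unfolding halfspace_def by simp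
    ultimately have "d x m \<noteq> 0"
      by auto
    have "u2 \<notin> ?H"
      using min[OF returning_change_witnesses[OF r _ y]] assms(4) by force
    with \<open>m \<in> ?H\<close> have "d m u2 \<noteq> 0"
      by auto
    with m(2) xu2 \<open>d x m \<noteq> 0\<close> have "d m u2 = 1"
      by linarith
    moreover have "d m y \<le> d m u2 + d u2 y"
      by (rule gdist_triangle)
    ultimately have "d m y < d x y"
      using assms(4) by linarith
    then show False
      using min[OF returning_change_witnesses[OF r \<open>m \<in> ?H\<close> y]] by simp
  qed
qed

lemma minimal_returning_translate_subset:
  assumes "minimal_returning a b x y" "E x u1" "E u1 u2" "d x y = d u2 y + 2"
  shows "g ` halfspace a b \<subseteq> halfspace u2 u1"
proof
  let ?gH = "g ` halfspace a b"
  note r = minimal_returningD(1)[OF assms(1)] and min = minimal_returningD(2)[OF assms(1)]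
  have E: "E (g a) (g b)" and x: "x \<in> halfspace a b" and y: "y \<in> ?gH"
    using r unfolding returning_def by auto
  have u1y: "d u1 y = d u2 y + 1"
    using geodesic_two_steps[OF assms(2-4)] by simp
  fix p
  assume "p \<in> ?gH"
  show "p \<in> halfspace u2 u1"
  proof (rule ccontr)
    assume p: "p \<notin> halfspace u2 u1"
    obtain m where m: "between p m y" "between y m u1" "between p m u1"
      using median_exists by blast
    have "m \<in> ?gH"
      using halfspace_convex[OF E] \<open>p \<in> ?gH\<close> y m(1) g_image_halfspace by metis
    have "m \<notin> halfspace u2 u1"
      using halfspace_complement_convex[OF edge_sym[OF assms(3)] p _ m(3)] by simp
    moreover have "y \<in> halfspace u2 u1"
      using u1y gdist_commute[of y] unfolding halfspace_def by simp
    ultimately have "d y m \<noteq> 0"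
      by auto
    with m(2) u1y have "d m u1 \<le> d u2 y"
      using gdist_commute[of y u1] by linarith
    moreover have "d x m \<le> d x u1 + d u1 m"
      by (rule gdist_triangle)
    ultimately have "d x m < d x y"
      using assms(4) gdist_edge[OF assms(2)] gdist_commute[of u1 m] by linarith
    then show False
      using min[OF returning_change_witnesses[OF r x \<open>m \<in> ?gH\<close>]] by simp
  qed
qed

text \<open>Otherwise L = halfspace u2 u1, which contains g H and misses H, would be disjoint
  from g L by non-crossing, and g^-1 L would return with the closer witnesses x and u2.\<close>
lemma minimal_returning_second_edge_disjoint:
  assumes "minimal_returning a b x y" "E x u1" "E u1 u2" "d x y = d u2 y + 2"
  shows "halfspace u1 u2 \<inter> g ` halfspace u1 u2 = {}"
proof (rule ccontr)
  let ?H = "halfspace a b" and ?L = "halfspace u2 u1"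
  assume "halfspace u1 u2 \<inter> g ` halfspace u1 u2 \<noteq> {}"
  moreover have "halfspace u1 u2 = - ?L"
    using halfspace_complement[OF edge_sym[OF assms(3)]] by simp
  ultimately have outside: "- (?L \<union> g ` ?L) \<noteq> {}"
    by (simp add: g_image_Compl Int_commute)
  note r = minimal_returningD(1)[OF assms(1)] and min = minimal_returningD(2)[OF assms(1)]
  obtain e where e: "e \<in> ?H" "e \<in> g ` g ` ?H"
    using r unfolding returning_def by blast
  have x: "x \<in> ?H" and y: "y \<in> g ` ?H"
    using r unfolding returning_def by auto
  have HL: "?H \<subseteq> - ?L" and gHL: "g ` ?H \<subseteq> ?L"
    using minimal_returning_halfspace_subset[OF assms] minimal_returning_translate_subset[OF assms]
      halfspace_complement[OF edge_sym[OF assms(3)]] by auto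
  have "y \<in> ?L - g ` ?L"
    using y gHL image_mono[OF HL, of g] g_image_Compl by blast
  moreover have "e \<in> g ` ?L - ?L"
    using e HL image_mono[OF gHL, of g] by blast
  ultimately have disjoint: "?L \<inter> g ` ?L = {}"
    using outside translate_not_crossing[OF edge_sym[OF assms(3)]]
    unfolding halfspaces_cross_def by blast
  let ?K = "inv g ` ?L"
  have "returning (inv g u2) (inv g u1) x u2"
    unfolding returning_def inv_g_image_halfspace[symmetric]
  proof (intro conjI)
    show "E (inv g u2) (inv g u1)" "u2 \<in> g ` ?K"
      using assms(3) edge_sym source_in_halfspace by auto
    show "x \<in> ?K"
      using x gHL by (auto simp: mem_inv_g_image_iff)
    show "?K \<inter> g ` ?K = {}"
      using disjoint by (auto simp: mem_inv_g_image_iff mem_g_image_iff)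
    have "e \<in> ?K"
      using e(1) gHL by (auto simp: mem_inv_g_image_iff)
    moreover have "e \<in> g ` g ` ?K"
      using e(2) image_mono[OF gHL, of g] by auto
    ultimately show "?K \<inter> g ` g ` ?K \<noteq> {}"
      by blast
  qed
  then have "d x y \<le> d x u2"
    by (rule min)
  then show False
    using geodesic_two_steps[OF assms(2-4)] assms(4) minimal_returning_gdist_ne_2[OF assms(1)]
    by linarith
qed

lemma not_minimal_returning: "\<not> minimal_returning a b x y"
proof
  let ?H = "halfspace a b"
  assume assms: "minimal_returning a b x y"
  note r = minimal_returningD(1)[OF assms] and min = minimal_returningD(2)[OF assms]
  have y: "y \<in> g ` ?H" and e: "?H \<inter> g ` g ` ?H \<noteq> {}"
    using r unfolding returning_def by blast+
  obtain n where n: "d x y = Suc (Suc n)"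
    using le_Suc_ex[OF returning_gdist_ge_2[OF r]] by (metis add_2_eq_Suc)
  obtain u1 where u1: "E x u1" "d u1 y = Suc n"
    using geodesic_step[OF n] by blast
  obtain u2 where u2: "E u1 u2" "d u2 y = n"
    using geodesic_step[OF u1(2)] by blast
  have geo: "d x y = d u2 y + 2"
    using n u2(2) by simp
  let ?L' = "halfspace u1 u2"
  have HL': "?H \<subseteq> ?L'"
    using minimal_returning_halfspace_subset[OF assms u1(1) u2(1) geo] .
  have "returning u1 u2 u1 y"
    unfolding returning_def
  proof (intro conjI)
    show "E u1 u2" "u1 \<in> ?L'"
      using u2(1) source_in_halfspace by auto
    show "y \<in> g ` ?L'"
      using y image_mono[OF HL', of g] by blast
    show "?L' \<inter> g ` ?L' = {}"
      using minimal_returning_second_edge_disjoint[OF assms u1(1) u2(1) geo] .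
    show "?L' \<inter> g ` g ` ?L' \<noteq> {}"
      using e HL' image_mono[OF image_mono[OF HL', of g], of g] by blast
  qed
  then have "d x y \<le> d u1 y"
    by (rule min)
  with u1(2) n show False
    by simp
qed

lemma not_returning: "\<not> returning a b x y"
  using minimal_returning_exists not_minimal_returning by blast

section \<open>The combinatorial minset\<close>

abbreviation minset :: "'v set" where
  "minset \<equiv> comb_minset E g"

lemma minsetD: "x \<in> minset \<Longrightarrow> d x (g x) \<le> d y (g y)"
  unfolding comb_minset_def by blast

lemma inv_g_minset: "y \<in> minset \<Longrightarrow> inv g y \<in> minset"
proof -
  have "inv g ` minset = minset"
    by (rule comb_minset_image_commuting_isometry[OF comb_isometry_inv[OF isometry]]) simp
  then show "y \<in> minset \<Longrightarrow> inv g y \<in> minset"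
    by blast
qed

text \<open>If the orbit points w, g w, g^2 w were on the wrong sides, the median of
  g^-1 w, w, g w would be displaced by g strictly less than w.\<close>
lemma minset_orbit_halfspace:
  assumes "w \<in> minset" "E a b"
    and "g w \<in> halfspace a b" "w \<notin> halfspace a b" "g (g w) \<notin> halfspace a b"
  shows "inv g w \<in> halfspace a b"
proof (rule ccontr)
  let ?p = "inv g w" and ?y = "g w"
  assume p: "?p \<notin> halfspace a b"
  obtain m where m: "between ?p m w" "between w m ?y" "between ?p m ?y"
    using median_exists by blast
  have "m \<notin> halfspace a b"
    using halfspace_complement_convex[OF assms(2) p assms(4) m(1)] .
  moreover have "between w (g m) (g ?y)"
    using m(3) gdist_g[of ?p] gdist_g[of m] gdist_g[of ?p ?y] by simp
  then have "g m \<notin> halfspace a b"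
    using halfspace_complement_convex[OF assms(2,4,5)] by blast
  ultimately have "d m (g m) + 2 \<le> d m ?y + d ?y (g m)"
    using halfspace_detour[OF assms(2,3)] by blast
  also have "d m ?y + d ?y (g m) = d w ?y"
    using m(2) gdist_commute[of w m] by simp
  finally show False
    using minsetD[OF assms(1), of m] by simp
qed

lemma minset_disjoint_halfspace:
  assumes "E a b" "halfspace a b \<inter> g ` halfspace a b = {}"
  shows "minset \<inter> halfspace a b = {}"
proof (rule equals0I)
  let ?H = "halfspace a b"
  fix y
  assume "y \<in> minset \<inter> ?H"
  then have y: "y \<in> minset" "y \<in> ?H" "y \<notin> g ` ?H" "g y \<notin> ?H"
    using assms(2) by auto
  then have "inv g (inv g y) \<in> ?H"
    using minset_orbit_halfspace[OF inv_g_minset[OF y(1)] assms(1)]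
    by (simp add: mem_g_image_iff)
  then have "y \<in> g ` g ` ?H"
    by (simp add: mem_g_image_iff)
  then have "returning a b y (g y)"
    unfolding returning_def using assms y(2) by blast
  then show False
    using not_returning by blast
qed

text \<open>If the step increased the displacement, the halfspace of z would be disjoint from its
  translate by non-crossing, yet contain the minset vertex y.\<close>
lemma minset_step:
  assumes "x \<in> minset" "y \<in> minset" "E x z" "d z y + 1 = d x y"
  shows "d z (g z) \<le> d x (g x)"
proof (rule ccontr)
  let ?H = "halfspace z x" and ?\<tau> = "d x (g x)"
  assume increase: "\<not> d z (g z) \<le> ?\<tau>"
  have zx: "E z x" "E (g z) (g x)"
    using assms(3) edge_sym by auto
  have "d z (g z) \<le> d z (g x) + d (g x) (g z)" "d z (g z) \<le> d z x + d x (g z)"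
    using gdist_triangle by blast+
  then have "d (g x) x \<le> d (g x) z" "d x (g x) \<le> d x (g z)"
    using increase gdist_edge[OF zx(1)] gdist_edge[OF assms(3)] gdist_commute[of "g x"] by auto
  then have gx: "d (g x) z = ?\<tau> + 1" and xgz: "d x (g z) = ?\<tau> + 1"
    using gdist_edge_parity[OF zx(1), of "g x"] gdist_edge_parity[OF zx(2), of x]
      gdist_commute[of "g x" x] by auto
  then have "d z (g z) = ?\<tau> + 2"
    using increase gdist_edge_parity[OF zx(2), of z] gdist_commute[of z "g x"] by auto
  then have "z \<notin> halfspace (g z) (g x)" "g z \<notin> ?H" "x \<notin> halfspace (g z) (g x)"
    using gx xgz gdist_commute[of "g z"] gdist_commute[of z "g x"] unfolding halfspace_def by auto
  then have "z \<in> ?H - g ` ?H" "g z \<in> g ` ?H - ?H" "x \<notin> ?H \<union> g ` ?H"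
    using source_in_halfspace[OF zx(1)] source_in_halfspace[OF zx(2)]
    by (auto simp: g_image_halfspace)
  then have "?H \<inter> g ` ?H = {}"
    using translate_not_crossing[OF zx(1)] unfolding halfspaces_cross_def by blast
  moreover have "y \<in> ?H"
    using assms(4) gdist_commute[of y] unfolding halfspace_def by simp
  ultimately show False
    using minset_disjoint_halfspace[OF zx(1)] assms(2) by blast
qed

lemma minset_convex: "spans_convex_subcomplex E minset"
  unfolding spans_convex_subcomplex_def
proof (intro ballI allI impI)
  fix x y z
  assume "x \<in> minset" "y \<in> minset" "between x z y"
  then show "z \<in> minset"
  proof (induction "d x z" arbitrary: x)
    case (Suc n)
    obtain x' where x': "E x x'" "d x' z = n" "d x' y + 1 = d x y"
      using interval_step[OF Suc.hyps(2)[symmetric] Suc.prems(3)] by blast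
    have "d x' (g x') \<le> d w (g w)" for w
      using minset_step[OF Suc.prems(1,2) x'(1,3)] minsetD[OF Suc.prems(1), of w] by linarith
    then have "x' \<in> minset"
      unfolding comb_minset_def by blast
    moreover have "between x' z y"
      using x' Suc.hyps(2) Suc.prems(3) by simp
    ultimately show ?case
      using Suc.hyps(1)[OF x'(2)[symmetric]] Suc.prems(2) by blast
  qed simp
qed

lemma zpow_minset: "zpow g n ` minset = minset"
  using comb_minset_image_commuting_isometry[OF comb_isometry_zpow[OF isometry]]
    zpow_commute[OF bij_g] by blast

end

theorem lemma3p3:
  fixes E :: "'v \<Rightarrow> 'v \<Rightarrow> bool" and g :: "'v \<Rightarrow> 'v"
  assumes "CAT0_cube_complex E"
    and "comb_isometry E g"
    and "free_action E g"
    and "cospecial E g"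
  shows "comb_minset E g \<noteq> {}
     \<and> (\<forall>n::int. zpow g n ` comb_minset E g = comb_minset E g)
     \<and> spans_convex_subcomplex E (comb_minset E g)"
proof -
  interpret cospecial_translation E g
    using assms(1,2,4) by unfold_locales
  show ?thesis
    using comb_minset_nonempty zpow_minset minset_convex by blast
qed

end
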